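(* Let $c>0$, $\beta\in[0,1)$ and let $\mathcal{D}_{n,c}^{*\beta}$ be the King-type modified Jain-Baskakov operators defined in the context. Then for every $x\ge 0$: (i) $\mathcal{D}_{n,c}^{*\beta}(t-x,x)=0$ for $n>2c$; (ii) for $n>3c$, $$\mathcal{D}_{n,c}^{*\beta}((t-x)^2,x)=\frac{c}{n-3c}\,x^2+\frac{2-2\beta+\beta^2}{(n-3c)(1-\beta)^2}\,x;$$ (iii) $\mathcal{D}_{n,c}^{*\beta}((t-x)^4,x)=o\!\left(\frac{1}{n}\right)$ as $n\to\infty$ (with $n>5c$, and $c,\beta,x$ fixed).
   Context: For $\beta\in[0,1)$, $y\ge 0$, $n\in\mathbb{N}$ and integers $v\ge 0$ let $\omega_\beta(v,ny)=ny(ny+v\beta)^{v-1}\frac{e^{-(ny+v\beta)}}{v!}$. For $c>0$, integers $v\ge1$ and $t\ge 0$ let $p_{n,v-1,c}(t)=c\,\frac{\Gamma(n/c+v-1)}{\Gamma(v)\Gamma(n/c)}\cdot\frac{(ct)^{v-1}}{(1+ct)^{n/c+v-1}}$. For $n>2c$ put $r_n(x)=\frac{(n-2c)(1-\beta)x}{n}$ and define, for functions $f$ on $[0,\infty)$ for which the integrals exist, $$\mathcal{D}_{n,c}^{*\beta}(f,x)=\frac{n-c}{c}\sum_{v=1}^{\infty}\omega_\beta(v,n r_n(x))\int_0^\infty p_{n,v-1,c}(t)f(t)\,dt+e^{-n r_n(x)}f(0),\quad x\ge0.$$ Here $\mathcal{D}_{n,c}^{*\beta}(g(t),x)$ means the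 operator applied to the function $t\mapsto g(t)$ and evaluated at $x$. *)

theory Defs
  imports "HOL-Analysis.Analysis" "HOL-Library.Landau_Symbols"
begin

definition omega_beta :: "real \<Rightarrow> nat \<Rightarrow> real \<Rightarrow> real" where
  "omega_beta \<beta> v u = u * (u + real v * \<beta>) ^ (v - 1) * exp (- (u + real v * \<beta>)) / fact v"

definition jb_p :: "nat \<Rightarrow> nat \<Rightarrow> real \<Rightarrow> real \<Rightarrow> real" where
  "jb_p n k c t = c * (Gamma (real n / c + real k) / (Gamma (real k + 1) * Gamma (real n / c)))
      * ((c * t) ^ k / (1 + c * t) powr (real n / c + real k))"

definition r_n :: "nat \<Rightarrow> real \<Rightarrow> real \<Rightarrow> real \<Rightarrow> real" where
  "r_n n c \<beta> x = (real n - 2 * c) * (1 - \<beta>) * x / real n"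

text \<open>King-type modified Jain-Baskakov operator; the sum index v ranges over v \<ge> 1,
  written as Suc v with v \<ge> 0, so that p_{n,(Suc v)-1,c} = jb_p n v c.\<close>
definition D_op :: "nat \<Rightarrow> real \<Rightarrow> real \<Rightarrow> (real \<Rightarrow> real) \<Rightarrow> real \<Rightarrow> real" where
  "D_op n c \<beta> f x =
     (real n - c) / c * (\<Sum>v. omega_beta \<beta> (Suc v) (real n * r_n n c \<beta> x)
                              * integral {0..} (\<lambda>t. jb_p n v c t * f t))
     + exp (- (real n * r_n n c \<beta> x)) * f 0"

end

theory Submission
  imports Defs
begin

lemma has_real_derivative_affine_powr:
  fixes c r t :: real
  assumes "1 + c*t > 0"
  shows "((\<lambda>t. (1 + c*t) powr r) has_real_derivative r * (1 + c*t) powr (r - 1) * c) (at t)"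
proof -
  have "DERIV (\<lambda>t. 1 + c*t) t :> c" by (auto intro!: derivative_eq_intros)
  from DERIV_fun_powr[OF this assms, of r] show ?thesis by simp
qed

lemma affine_powr_moment_0:
  fixes c q :: real
  assumes c: "c > 0" and q: "q > 1"
  shows "set_integrable lborel {0<..} (\<lambda>t. (1 + c*t) powr (-q))"
    and "(LINT t:{0<..}|lborel. (1 + c*t) powr (-q)) = 1 / (c * (q - 1))"
proof -
  define F where "F t = - ((1 + c*t) powr (1 - q)) / (c * (q - 1))" for t
  have pos: "1 + c*t > 0" if "0 < ereal t" for t
    using that c by (simp add: zero_ereal_def add_pos_pos)
  have D: "DERIV F t :> (1 + c*t) powr (-q)" if "0 < ereal t" for t
  proof -
    have "DERIV F t :> - ((1 - q) * (1 + c*t) powr (1 - q - 1) * c) / (c * (q - 1))"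
      unfolding F_def by (intro DERIV_cdivide DERIV_minus has_real_derivative_affine_powr pos that)
    moreover have "- ((1 - q) * (1 + c*t) powr (1 - q - 1) * c) / (c * (q - 1)) = (1 + c*t) powr (-q)"
      using c q by (simp add: field_simps)
    ultimately show ?thesis by simp
  qed
  have C: "isCont (\<lambda>t. (1 + c*t) powr (-q)) t" if "0 < ereal t" for t
    using pos[OF that] by (auto intro!: continuous_intros)
  have A: "((F \<circ> real_of_ereal) \<longlongrightarrow> -1/(c*(q-1))) (at_right (0::ereal))"
  proof -
    have "(F \<longlongrightarrow> -1/(c*(q-1))) (at_right 0)"
      unfolding F_def by (rule tendsto_eq_intros refl)+ (use c q in auto)
    then show ?thesis using ereal_tendsto_simps1(2)[of F _ 0] by (simp add: zero_ereal_def)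
  qed
  have "((\<lambda>t. (1 + c*t) powr (1 - q)) \<longlongrightarrow> 0) at_top"
    using q c by (intro tendsto_neg_powr filterlim_tendsto_add_at_top[OF tendsto_const]
        filterlim_tendsto_pos_mult_at_top[OF tendsto_const c filterlim_ident]) auto
  from tendsto_divide[OF tendsto_minus[OF this] tendsto_const, of "c*(q-1)"]
  have B: "((F \<circ> real_of_ereal) \<longlongrightarrow> 0) (at_left (\<infinity>::ereal))"
    unfolding ereal_tendsto_simps1(3) unfolding F_def using c q by simp
  note FTC = interval_integral_FTC_nonneg[of 0 \<infinity> F, OF _ D C _ A B]
  show "set_integrable lborel {0<..} (\<lambda>t. (1 + c*t) powr (-q))"
    using FTC(1) by (simp add: zero_ereal_def)
  show "(LINT t:{0<..}|lborel. (1 + c*t) powr (-q)) = 1 / (c * (q - 1))"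
    using FTC(2) by (simp add: interval_lebesgue_integral_le_eq zero_ereal_def)
qed

lemma set_integrable_power_Suc_affine_powr:
  fixes c q :: real and p :: nat
  assumes c: "c > 0" and int: "set_integrable lborel {0<..} (\<lambda>t. t^p * (1 + c*t) powr (-(q-1)))"
  shows "set_integrable lborel {0<..} (\<lambda>t. t^Suc p * (1 + c*t) powr (-q))"
proof -
  define g where "g t = t^Suc p * (1 + c*t) powr (-q)" for t
  define h where "h t = t^p * (1 + c*t) powr (-(q-1))" for t
  have "norm (g t) \<le> norm (h t / c)" if "t \<in> {0<..}" for t
  proof -
    have t: "t > 0" and pos: "1 + c*t > 0"
      using that c by (simp_all add: add_pos_pos)
    have "t^Suc p * (1 + c*t) powr (-q) \<le> t^p * (1 + c*t) / c * (1 + c*t) powr (-q)"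
      using t c by (intro mult_right_mono) (auto simp: field_simps)
    also have "\<dots> = h t / c"
      using pos unfolding h_def by (simp add: powr_diff powr_minus_divide)
    finally have "g t \<le> h t / c"
      unfolding g_def .
    moreover have "0 \<le> h t" unfolding h_def using t by simp
    ultimately show ?thesis
      using t c unfolding g_def by simp
  qed
  moreover have "set_integrable lborel {0<..} (\<lambda>t. h t / c)"
    using int unfolding h_def by (simp add: set_integrable_divide)
  moreover have "set_borel_measurable lborel {0<..} g"
    unfolding g_def set_borel_measurable_def by measurable
  ultimately show ?thesis
    using set_integrable_bound[of _ _ "\<lambda>t. h t / c" g] unfolding g_def by blast
qed

lemma power_Suc_mult_affine_powr_tendsto_0:
  fixes c q :: real and p :: nat
  assumes c: "c > 0" and q: "q > real p + 2"
  shows "((\<lambda>t. t^Suc p * (1 + c*t) powr (-(q-1))) \<longlongrightarrow> 0) at_top"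
proof (rule tendsto_sandwich[of "\<lambda>_. 0"])
  show "((\<lambda>t. (1/c)^Suc p * (1 + c*t) powr (real p + 2 - q)) \<longlongrightarrow> 0) at_top"
    using q c by (intro tendsto_mult_right_zero tendsto_neg_powr
        filterlim_tendsto_add_at_top[OF tendsto_const]
        filterlim_tendsto_pos_mult_at_top[OF tendsto_const c filterlim_ident]) auto
  show "eventually (\<lambda>t. t^Suc p * (1 + c*t) powr (-(q-1)) \<le> (1/c)^Suc p * (1 + c*t) powr (real p + 2 - q)) at_top"
    using eventually_gt_at_top[of 0]
  proof eventually_elim
    case (elim t)
    then have pos: "1 + c*t > 0"
      using c by (simp add: add_pos_pos)
    have "t^Suc p \<le> ((1 + c*t)/c)^Suc p"
      using elim c by (intro power_mono) (auto simp: field_simps)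
    then have "t^Suc p * (1 + c*t) powr (-(q-1)) \<le> ((1 + c*t)/c)^Suc p * (1 + c*t) powr (-(q-1))"
      by (intro mult_right_mono) auto
    also have "\<dots> = (1/c)^Suc p * ((1 + c*t)^Suc p * (1 + c*t) powr (-(q-1)))"
      by (simp add: power_divide)
    also have "\<dots> = (1/c)^Suc p * ((1 + c*t) powr real (Suc p) * (1 + c*t) powr (-(q-1)))"
      using pos by (simp only: powr_realpow)
    also have "\<dots> = (1/c)^Suc p * (1 + c*t) powr (real p + 2 - q)"
      by (simp add: powr_add[symmetric] algebra_simps)
    finally show ?case .
  qed
  show "eventually (\<lambda>t. 0 \<le> t^Suc p * (1 + c*t) powr (-(q-1))) at_top"
    using eventually_gt_at_top[of 0] by eventually_elim simp
qed simp

lemma affine_powr_moment_Suc: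
  fixes c q :: real and p :: nat
  assumes c: "c > 0" and q: "q > real p + 2"
    and int: "set_integrable lborel {0<..} (\<lambda>t. t^p * (1 + c*t) powr (-(q-1)))"
  shows "(LINT t:{0<..}|lborel. t^Suc p * (1 + c*t) powr (-q))
           = (real p + 1) / (c * (q - 1)) * (LINT t:{0<..}|lborel. t^p * (1 + c*t) powr (-(q-1)))"
proof -
  define g where "g t = t^Suc p * (1 + c*t) powr (-q)" for t
  define h where "h t = t^p * (1 + c*t) powr (-(q-1))" for t
  note G = set_integrable_power_Suc_affine_powr[OF c int]
  text \<open>Integration by parts, written as the fundamental theorem for the product
    F t = t^(p+1) (1 + c t)^(1 - q), which vanishes at both ends.\<close>
  define F where "F t = t^Suc p * (1 + c*t) powr (-(q-1))" for t
  define f where "f t = (real p + 1) * h t - c * (q - 1) * g t" for t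
  have pos: "1 + c*t > 0" if "0 < ereal t" for t
    using that c by (simp add: zero_ereal_def add_pos_pos)
  have D: "(F has_vector_derivative f t) (at t)" if "0 < ereal t" for t
  proof -
    from pos[OF that] have "DERIV F t :> (real (Suc p) * t^p) * (1 + c*t) powr (-(q-1))
        + (-(q-1) * (1 + c*t) powr (-(q-1) - 1) * c) * t^Suc p"
      unfolding F_def using DERIV_pow[of "Suc p" t]
      by (intro DERIV_mult has_real_derivative_affine_powr) simp
    moreover have "(real (Suc p) * t^p) * (1 + c*t) powr (-(q-1))
        + (-(q-1) * (1 + c*t) powr (-(q-1) - 1) * c) * t^Suc p = f t"
      unfolding f_def g_def h_def by (simp add: algebra_simps)
    ultimately show ?thesis by (simp add: has_real_derivative_iff_has_vector_derivative)
  qed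
  have C: "isCont f t" if "0 < ereal t" for t
    using pos[OF that] unfolding f_def g_def h_def by (auto intro!: continuous_intros)
  have f_int: "set_integrable lborel (einterval 0 \<infinity>) f"
    unfolding f_def using int G unfolding g_def h_def by (simp add: zero_ereal_def)
  have A: "((F \<circ> real_of_ereal) \<longlongrightarrow> 0) (at_right (0::ereal))"
  proof -
    have "(F \<longlongrightarrow> 0) (at_right 0)"
      unfolding F_def by (rule tendsto_eq_intros refl)+ (use c in auto)
    then show ?thesis using ereal_tendsto_simps1(2)[of F _ 0] by (simp add: zero_ereal_def)
  qed
  have B: "((F \<circ> real_of_ereal) \<longlongrightarrow> 0) (at_left (\<infinity>::ereal))"
    unfolding ereal_tendsto_simps1(3) F_def by (rule power_Suc_mult_affine_powr_tendsto_0[OF c q])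
  have "(LBINT t=0..\<infinity>. f t) = 0 - 0"
    by (rule interval_integral_FTC_integrable[OF _ D _ f_int A B]) (auto intro: C)
  then have "(LINT t:{0<..}|lborel. f t) = 0"
    by (simp add: interval_lebesgue_integral_le_eq zero_ereal_def)
  moreover have "(LINT t:{0<..}|lborel. f t)
      = (real p + 1) * (LINT t:{0<..}|lborel. h t) - c * (q - 1) * (LINT t:{0<..}|lborel. g t)"
    unfolding f_def using int G unfolding g_def h_def by (subst set_integral_diff) auto
  ultimately show ?thesis
    using c q unfolding g_def h_def by (simp add: field_simps)
qed

lemma affine_powr_moment:
  fixes c q :: real and p :: nat
  assumes c: "c > 0" and q: "q > real p + 1"
  shows "set_integrable lborel {0<..} (\<lambda>t. t^p * (1 + c*t) powr (-q)) \<and>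
    (LINT t:{0<..}|lborel. t^p * (1 + c*t) powr (-q)) = Beta (real p + 1) (q - real p - 1) / c^(p+1)"
  using q
proof (induction p arbitrary: q)
  case 0
  then have q1: "q > 1" by simp
  then have "q - 1 \<notin> \<int>\<^sub>\<le>\<^sub>0"
    by (auto dest: nonpos_Ints_nonpos)
  from Gamma_plus1[OF this] have "Gamma q = (q - 1) * Gamma (q - 1)"
    by simp
  moreover have "Gamma (q - 1) > 0"
    using q1 by simp
  ultimately have "Beta 1 (q - 1) = 1 / (q - 1)"
    by (simp add: Beta_def)
  then show ?case
    using affine_powr_moment_0[OF c q1] by simp
next
  case (Suc p)
  then have IH: "set_integrable lborel {0<..} (\<lambda>t. t^p * (1 + c*t) powr (-(q-1)))"
    "(LINT t:{0<..}|lborel. t^p * (1 + c*t) powr (-(q-1))) = Beta (real p + 1) (q - real p - 2) / c^(p+1)"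
    using Suc.IH[of "q - 1"] by (simp_all add: algebra_simps)
  note step = set_integrable_power_Suc_affine_powr[OF c IH(1)] affine_powr_moment_Suc[OF c _ IH(1)]
  have "real p + 1 \<notin> \<int>\<^sub>\<le>\<^sub>0"
    by (auto dest: nonpos_Ints_nonpos)
  from Beta_plus1_left[OF this, of "q - real p - 2"]
  have B: "(q - 1) * Beta (real p + 2) (q - real p - 2) = (real p + 1) * Beta (real p + 1) (q - real p - 2)"
    by (simp add: algebra_simps)
  have "(LINT t:{0<..}|lborel. t^Suc p * (1 + c*t) powr (-q))
      = (real p + 1) / (c * (q - 1)) * (Beta (real p + 1) (q - real p - 2) / c^(p+1))"
    using step(2) Suc.prems unfolding IH(2) by simp
  also have "\<dots> = (real p + 1) * Beta (real p + 1) (q - real p - 2) / ((q - 1) * c^(p+2))"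
    by simp
  also have "\<dots> = Beta (real p + 2) (q - real p - 2) / c^(p+2)"
    unfolding B[symmetric] using Suc.prems by simp
  finally show ?case
    using step(1) Suc.prems by (simp add: algebra_simps)
qed

lemma has_integral_affine_powr_moment:
  fixes c q :: real and p :: nat
  assumes "c > 0" and "q > real p + 1"
  shows "((\<lambda>t. t^p * (1 + c*t) powr (-q)) has_integral Beta (real p + 1) (q - real p - 1) / c^(p+1)) {0..}"
proof -
  note I = affine_powr_moment[OF assms, THEN conjunct1] affine_powr_moment[OF assms, THEN conjunct2]
  have "((\<lambda>t. t^p * (1 + c*t) powr (-q)) has_integral Beta (real p + 1) (q - real p - 1) / c^(p+1)) {0<..}"
    using set_borel_integral_eq_integral[OF I(1)] I(2) by (simp add: has_integral_integral)
  then show ?thesis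
    by (rule has_integral_spike_set_eq[THEN iffD1, rotated 2]) (auto intro: negligible_subset[of "{0}"])
qed

lemma power_mult_pochhammer_eq_prod:
  fixes c x :: real
  shows "c ^ j * pochhammer (x - real j) j = (\<Prod>i=1..j. c * x - real i * c)"
proof -
  have "pochhammer (x - real j) j = (\<Prod>i=1..j. x - real i)"
    unfolding pochhammer_prod_rev by (rule prod.cong) (auto simp: of_nat_diff)
  moreover have "(\<Prod>i=1..j. c * (x - real i)) = c ^ j * (\<Prod>i=1..j. x - real i)"
    by (simp add: prod.distrib)
  ultimately show ?thesis
    by (simp add: right_diff_distrib mult.commute)
qed

lemma Gamma_shift_eq_pochhammer:
  fixes x :: real
  assumes "x > 0"
  shows "Gamma (x + real m) = pochhammer x m * Gamma x"
proof -
  have "x \<notin> \<int>\<^sub>\<le>\<^sub>0"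
    using assms by (auto dest: nonpos_Ints_nonpos)
  then show ?thesis
    using pochhammer_Gamma[of x m] Gamma_real_pos[OF assms] by simp
qed

lemma prod_atLeast1_atMost_Suc_eq:
  fixes f :: "nat \<Rightarrow> 'a::comm_monoid_mult"
  shows "(\<Prod>i=1..m+1. f i) = f 1 * (\<Prod>i<m. f (i + 2))"
  by (induction m) (simp_all add: mult_ac)

lemma has_integral_jb_p_moment:
  fixes c :: real and n k m :: nat
  assumes c: "c > 0" and n: "real n > (real m + 1) * c"
  shows "((\<lambda>t. jb_p n k c t * t^m) has_integral
           c / (real n - c) * (pochhammer (real k + 1) m / (\<Prod>i<m. real n - (real i + 2) * c))) {0..}"
proof -
  define N where "N = real n / c"
  have N: "N - real m - 1 > 0"
    using n c unfolding N_def by (simp add: field_simps)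
  define K where "K = c * (Gamma (N + real k) / (Gamma (real k + 1) * Gamma N)) * c^k"
  have jb_p_eq: "jb_p n k c t * t^m = K * (t^(k+m) * (1 + c*t) powr (-(N + real k)))" for t
    unfolding jb_p_def K_def N_def powr_minus
    by (simp add: power_mult_distrib power_add divide_inverse algebra_simps)
  have "((\<lambda>t. jb_p n k c t * t^m) has_integral
      K * (Beta (real (k+m) + 1) (N + real k - real (k+m) - 1) / c^(k+m+1))) {0..}"
    unfolding jb_p_eq using N c
    by (intro has_integral_mult_right has_integral_affine_powr_moment) auto
  moreover have "K * (Beta (real (k+m) + 1) (N + real k - real (k+m) - 1) / c^(k+m+1))
      = c * pochhammer (real k + 1) m / (\<Prod>i=1..m+1. real n - real i * c)"
  proof -
    have gamma_k: "Gamma (real (k+m) + 1) = pochhammer (real k + 1) m * Gamma (real k + 1)"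
      using Gamma_shift_eq_pochhammer[of "real k + 1" m] by (simp add: add_ac)
    have gamma_N: "Gamma N = pochhammer (N - real m - 1) (m+1) * Gamma (N - real m - 1)"
      using Gamma_shift_eq_pochhammer[OF N, of "m+1"] by simp
    have "0 < Gamma (1 + real k)"
      by simp
    then have "Gamma (1 + real k) \<noteq> 0"
      by (rule less_imp_neq[THEN not_sym])
    moreover have "Gamma (N + real k) > 0" "Gamma (N - real m - 1) > 0" "pochhammer (N - real m - 1) (m+1) > 0"
      using N by (simp_all add: pochhammer_pos)
    ultimately have "K * (Beta (real (k+m) + 1) (N + real k - real (k+m) - 1) / c^(k+m+1))
        = c * pochhammer (real k + 1) m / (c ^ (m+1) * pochhammer (N - real m - 1) (m+1))"
      using c unfolding K_def Beta_def gamma_N gamma_k by (simp add: field_simps power_add)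
    also have "c ^ (m+1) * pochhammer (N - real m - 1) (m+1) = (\<Prod>i=1..m+1. real n - real i * c)"
      using power_mult_pochhammer_eq_prod[of c "m+1" N] c unfolding N_def
      by (simp add: algebra_simps del: prod.cl_ivl_Suc)
    finally show ?thesis .
  qed
  moreover have "(\<Prod>i=1..m+1. real n - real i * c) = (real n - c) * (\<Prod>i<m. real n - (real i + 2) * c)"
    unfolding prod_atLeast1_atMost_Suc_eq by (simp add: add_ac)
  ultimately show ?thesis by simp
qed

definition abel_poly :: "real \<Rightarrow> real \<Rightarrow> nat \<Rightarrow> real" where
  "abel_poly a y k = (if k = 0 then 1 else y * (y + real k * a) ^ (k - 1))"

lemma abel_poly_0 [simp]: "abel_poly a y 0 = 1"
  by (simp add: abel_poly_def)

lemma has_real_derivative_abel_poly: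
  "((\<lambda>y. abel_poly a y k) has_real_derivative real k * abel_poly a (y + a) (k - 1)) (at y)"
proof (cases k)
  case 0
  then show ?thesis by (simp add: abel_poly_def)
next
  case (Suc m)
  define Y where "Y = y + real (Suc m) * a"
  have "((\<lambda>y. y * (y + real (Suc m) * a) ^ m) has_real_derivative Y ^ m + real m * Y ^ (m - 1) * y) (at y)"
    unfolding Y_def by (auto intro!: derivative_eq_intros)
  moreover have "Y ^ m + real m * Y ^ (m - 1) * y = real (Suc m) * abel_poly a (y + a) m"
  proof (cases m)
    case (Suc j)
    then have "Y = y + a + real (Suc j) * a"
      unfolding Y_def by (simp add: algebra_simps)
    then show ?thesis
      using Suc by (simp add: abel_poly_def algebra_simps)
  qed (simp add: abel_poly_def)
  ultimately show ?thesis
    using Suc by (simp add: abel_poly_def)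
qed

lemma sum_binomial_index_shift:
  fixes f g :: "nat \<Rightarrow> real"
  shows "(\<Sum>k\<le>Suc m. real (Suc m choose k) * (real k * f (k - 1)) * g (Suc m - k))
    = real (Suc m) * (\<Sum>k\<le>m. real (m choose k) * f k * g (m - k))"
proof -
  have "(\<Sum>k\<le>Suc m. real (Suc m choose k) * (real k * f (k - 1)) * g (Suc m - k))
      = (\<Sum>k\<le>m. real (Suc m choose Suc k) * real (Suc k) * f k * g (m - k))"
    by (subst sum.atMost_Suc_shift) (simp add: mult.assoc)
  also have "\<dots> = (\<Sum>k\<le>m. real (Suc m) * (real (m choose k) * f k * g (m - k)))"
  proof (intro sum.cong refl)
    fix k
    have "real (Suc m choose Suc k) * real (Suc k) = real (Suc m) * real (m choose k)"
      by (metis Suc_times_binomial mult.commute of_nat_mult)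
    then show "real (Suc m choose Suc k) * real (Suc k) * f k * g (m - k)
        = real (Suc m) * (real (m choose k) * f k * g (m - k))"
      by (simp only: mult.assoc)
  qed
  finally show ?thesis
    by (simp only: sum_distrib_left)
qed

text \<open>Abel's identity: at x = 0 both sides reduce to abel_poly a y n, and by the induction
  hypothesis they have the same derivative in x.\<close>
lemma abel_poly_binomial:
  "(\<Sum>k\<le>n. real (n choose k) * abel_poly a x k * abel_poly a y (n - k)) = abel_poly a (x + y) n"
proof (induction n arbitrary: x y)
  case 0
  then show ?case by simp
next
  case (Suc m)
  define L where "L x = (\<Sum>k\<le>Suc m. real (Suc m choose k) * abel_poly a x k * abel_poly a y (Suc m - k))" for x
  have "(L has_real_derivative
      (\<Sum>k\<le>Suc m. real (Suc m choose k) * (real k * abel_poly a (x + a) (k - 1)) * abel_poly a y (Suc m - k))) (at x)" for x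
    unfolding L_def by (intro DERIV_sum DERIV_cmult_right DERIV_cmult has_real_derivative_abel_poly)
  moreover have "(\<Sum>k\<le>Suc m. real (Suc m choose k) * (real k * abel_poly a (x + a) (k - 1)) * abel_poly a y (Suc m - k))
      = real (Suc m) * abel_poly a (x + y + a) m" for x
    unfolding sum_binomial_index_shift Suc.IH by (simp only: add_ac)
  moreover have "((\<lambda>x. abel_poly a (x + y) (Suc m)) has_real_derivative real (Suc m) * abel_poly a (x + y + a) m) (at x)" for x
    using DERIV_chain2[OF has_real_derivative_abel_poly DERIV_add[OF DERIV_ident DERIV_const],
        of a y "Suc m" x UNIV]
    by simp
  ultimately have "((\<lambda>x. L x - abel_poly a (x + y) (Suc m)) has_real_derivative 0) (at x)" for x
    using DERIV_diff by fastforce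
  then have "L x - abel_poly a (x + y) (Suc m) = L 0 - abel_poly a (0 + y) (Suc m)"
    using DERIV_isconst_all[of "\<lambda>x. L x - abel_poly a (x + y) (Suc m)" x 0] by blast
  moreover have "L 0 = abel_poly a y (Suc m)"
    unfolding L_def by (subst sum.atMost_shift) (simp add: abel_poly_def)
  ultimately show ?case
    unfolding L_def by simp
qed

lemma abs_abel_poly_le:
  assumes "\<bar>y\<bar> \<le> Y" and "a \<ge> 0"
  shows "\<bar>abel_poly a y n\<bar> \<le> (Y + real n * a) ^ n"
proof (cases n)
  case (Suc m)
  have "real n * a \<ge> 0"
    using assms(2) by simp
  then have "\<bar>y\<bar> \<le> Y + real n * a" "\<bar>y + real n * a\<bar> \<le> Y + real n * a"
    using assms(1) by (simp_all only: abs_le_iff) linarith+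
  then have "\<bar>y\<bar> * \<bar>y + real n * a\<bar> ^ m \<le> (Y + real n * a) * (Y + real n * a) ^ m"
    by (intro mult_mono power_mono) auto
  then show ?thesis
    using Suc by (simp add: abel_poly_def abs_mult power_abs)
qed simp

lemma power_div_fact_le_exp:
  fixes x :: real
  assumes "x \<ge> 0"
  shows "x ^ n / fact n \<le> exp x"
proof -
  have s: "(\<lambda>k. x ^ k / fact k) sums exp x"
    using exp_converges[of x] by (simp add: divide_inverse_commute)
  have "sum (\<lambda>k. x ^ k / fact k) {n} \<le> suminf (\<lambda>k. x ^ k / fact k)"
    by (rule sum_le_suminf) (use s assms in \<open>auto simp: sums_iff\<close>)
  then show ?thesis
    using s by (simp add: sums_iff)
qed

lemma power_add_le_exp_mult_power:
  fixes a Y :: real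
  assumes a: "a > 0" and Y: "Y \<ge> 0"
  shows "(Y + real n * a) ^ n \<le> exp (Y / a) * (real n * a) ^ n"
proof (cases "n = 0")
  case False
  then have na: "real n * a > 0"
    using a by simp
  have "Y + real n * a = real n * a * (1 + Y / (real n * a))"
    using a False by (simp add: distrib_left)
  also have "\<dots> \<le> real n * a * exp (Y / (real n * a))"
    using na by (intro mult_left_mono exp_ge_add_one_self) auto
  finally have "(Y + real n * a) ^ n \<le> (real n * a) ^ n * exp (Y / (real n * a)) ^ n"
    using Y na by (simp add: power_mult_distrib[symmetric] power_mono)
  also have "exp (Y / (real n * a)) ^ n = exp (Y / a)"
    using False a by (simp add: exp_of_nat_mult[symmetric])
  finally show ?thesis
    by (simp add: mult_ac)
qed (use Y a in simp)

lemma power_mult_div_fact_le: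
  fixes a :: real
  assumes "a \<ge> 0"
  shows "(real n * a) ^ n / fact n \<le> (a * exp 1) ^ n"
proof -
  have "real n ^ n / fact n \<le> exp 1 ^ n"
    using power_div_fact_le_exp[of "real n" n] by (simp add: exp_of_nat_mult[symmetric])
  then have "a ^ n * (real n ^ n / fact n) \<le> a ^ n * exp 1 ^ n"
    using assms by (intro mult_left_mono) auto
  then show ?thesis
    by (simp add: power_mult_distrib mult_ac)
qed

text \<open>The majorant behind all convergence statements: it is dominated by a geometric series
  of ratio a z e.\<close>
lemma summable_abel_majorant:
  fixes a z Y :: real
  assumes a: "a \<ge> 0" and z: "z \<ge> 0" and az: "a * z * exp 1 < 1" and Y: "Y \<ge> 0"
  shows "summable (\<lambda>n. (Y + real n * a) ^ n / fact n * z ^ n)"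
proof (cases "a = 0")
  case True
  then show ?thesis
    using summable_exp[of "Y * z"] by (simp add: power_mult_distrib divide_inverse mult_ac)
next
  case False
  with a have a: "a > 0" by simp
  have bound: "(Y + real n * a) ^ n / fact n * z ^ n \<le> exp (Y / a) * (a * exp 1 * z) ^ n" for n
  proof -
    have "(Y + real n * a) ^ n / fact n \<le> exp (Y / a) * ((real n * a) ^ n / fact n)"
      using divide_right_mono[OF power_add_le_exp_mult_power[OF a Y, of n], of "fact n"] by simp
    also have "\<dots> \<le> exp (Y / a) * (a * exp 1) ^ n"
      using power_mult_div_fact_le[of a n] a by (intro mult_left_mono) auto
    finally have "(Y + real n * a) ^ n / fact n \<le> exp (Y / a) * (a * exp 1) ^ n" .
    from mult_right_mono[OF this, of "z ^ n"] show ?thesis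
      using z by (simp add: power_mult_distrib mult.assoc)
  qed
  have "summable (\<lambda>n. exp (Y / a) * (a * exp 1 * z) ^ n)"
    using az a z by (intro summable_mult summable_geometric) (simp add: mult_ac)
  then show ?thesis
    by (rule summable_comparison_test[rotated]) (use bound Y a z in \<open>auto intro!: exI[of _ 0]\<close>)
qed

definition abel_domain :: "real \<Rightarrow> real set" where
  "abel_domain a = {z. \<bar>z\<bar> * a * exp 1 < 1}"

lemma open_abel_domain: "open (abel_domain a)"
  unfolding abel_domain_def by (intro open_Collect_less continuous_intros)

lemma abel_domain_0 [simp]: "0 \<in> abel_domain a"
  by (simp add: abel_domain_def)

lemma summable_abs_abel_poly:
  assumes "a \<ge> 0" and "z \<in> abel_domain a" and "\<bar>y\<bar> \<le> Y"
  shows "summable (\<lambda>n. \<bar>abel_poly a y n / fact n\<bar> * \<bar>z\<bar> ^ n)"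
proof (rule summable_comparison_test[OF _ summable_abel_majorant[of a "\<bar>z\<bar>" Y]])
  show "\<exists>N. \<forall>n\<ge>N. norm (\<bar>abel_poly a y n / fact n\<bar> * \<bar>z\<bar> ^ n) \<le> (Y + real n * a) ^ n / fact n * \<bar>z\<bar> ^ n"
    using abs_abel_poly_le[OF assms(3,1)]
    by (auto simp: abs_mult intro!: exI[of _ 0] mult_right_mono divide_right_mono)
qed (use assms in \<open>auto simp: abel_domain_def mult_ac\<close>)

definition abel_fps :: "real \<Rightarrow> real \<Rightarrow> real fps" where
  "abel_fps a y = Abs_fps (\<lambda>n. abel_poly a y n / fact n)"

lemma abel_fps_conv_radius:
  assumes a: "a \<ge> 0" and z: "z \<in> abel_domain a"
  shows "ereal \<bar>z\<bar> < fps_conv_radius (abel_fps a y)"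
proof -
  define e where "e = a * exp 1"
  define w where "w = \<bar>z\<bar> + (1 - \<bar>z\<bar> * e) / (e + 1)"
  have e: "e \<ge> 0" "\<bar>z\<bar> * e < 1"
    using a z by (simp_all add: e_def abel_domain_def mult.assoc)
  then have "w * e < \<bar>z\<bar> * e + (1 - \<bar>z\<bar> * e)"
    unfolding w_def by (simp add: field_simps)
  then have w: "\<bar>z\<bar> < w" "w \<in> abel_domain a"
    using e unfolding w_def by (auto simp: abel_domain_def e_def mult.assoc)
  have "summable (\<lambda>n. \<bar>abel_poly a y n / fact n * w ^ n\<bar>)"
    using summable_abs_abel_poly[OF a w(2) order.refl] by (simp only: abs_mult power_abs)
  then have "summable (\<lambda>n. abel_poly a y n / fact n * w ^ n)"
    by (rule summable_rabs_cancel)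
  from conv_radius_geI[OF this] have "ereal \<bar>w\<bar> \<le> fps_conv_radius (abel_fps a y)"
    by (simp add: fps_conv_radius_def abel_fps_def)
  moreover have "ereal \<bar>z\<bar> < ereal \<bar>w\<bar>"
    using w(1) by simp
  ultimately show ?thesis
    by (rule less_le_trans[rotated])
qed

lemma abel_fps_add: "abel_fps a (x + y) = abel_fps a x * abel_fps a y"
proof (rule fps_ext)
  fix n
  have "fps_nth (abel_fps a x * abel_fps a y) n
      = (\<Sum>i\<le>n. abel_poly a x i / fact i * (abel_poly a y (n - i) / fact (n - i)))"
    by (simp add: fps_mult_nth abel_fps_def atLeast0AtMost)
  also have "\<dots> = (\<Sum>i\<le>n. real (n choose i) * abel_poly a x i * abel_poly a y (n - i)) / fact n"
    unfolding sum_divide_distrib by (intro sum.cong refl) (simp add: binomial_fact field_simps)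
  also have "\<dots> = fps_nth (abel_fps a (x + y)) n"
    by (simp add: abel_poly_binomial abel_fps_def)
  finally show "fps_nth (abel_fps a (x + y)) n = fps_nth (abel_fps a x * abel_fps a y) n" ..
qed

lemma abel_fps_0: "abel_fps a 0 = 1"
  by (rule fps_ext) (simp add: abel_fps_def abel_poly_def)

definition abel_gf :: "real \<Rightarrow> real \<Rightarrow> real \<Rightarrow> real" where
  "abel_gf a y z = eval_fps (abel_fps a y) z"

lemma abel_gf_add:
  assumes "a \<ge> 0" and "z \<in> abel_domain a"
  shows "abel_gf a (x + y) z = abel_gf a x z * abel_gf a y z"
  unfolding abel_gf_def abel_fps_add
  by (intro eval_fps_mult) (simp_all add: abel_fps_conv_radius[OF assms])

lemma abel_gf_0 [simp]: "abel_gf a 0 z = 1"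
  by (simp add: abel_gf_def abel_fps_0)

definition abel_slope_coeff :: "real \<Rightarrow> real \<Rightarrow> nat \<Rightarrow> real" where
  "abel_slope_coeff a h n = (if n = 0 then 0 else (h + real n * a) ^ (n - 1) / fact n)"

definition abel_slope :: "real \<Rightarrow> real \<Rightarrow> real \<Rightarrow> real" where
  "abel_slope a h z = (\<Sum>n. abel_slope_coeff a h n * z ^ n)"

lemma abs_abel_slope_term_le:
  assumes "a \<ge> 0" and "\<bar>h\<bar> \<le> 1"
  shows "\<bar>abel_slope_coeff a h n * z ^ n\<bar> \<le> \<bar>abel_poly a 1 n / fact n\<bar> * \<bar>z\<bar> ^ n"
proof -
  have "\<bar>abel_slope_coeff a h n\<bar> \<le> \<bar>abel_poly a 1 n / fact n\<bar>"
  proof (cases n)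
    case (Suc m)
    have "real n * a \<ge> 0"
      using assms(1) by simp
    then have "\<bar>h + real n * a\<bar> \<le> 1 + real n * a"
      using assms(2) by (simp only: abs_le_iff) linarith
    then have "\<bar>h + real n * a\<bar> ^ m \<le> (1 + real n * a) ^ m"
      by (intro power_mono) auto
    then show ?thesis
      using Suc assms by (simp add: abel_slope_coeff_def abel_poly_def power_abs divide_right_mono)
  qed (simp add: abel_slope_coeff_def)
  from mult_right_mono[OF this, of "\<bar>z\<bar> ^ n"] show ?thesis
    by (simp add: abs_mult power_abs)
qed

lemma summable_abel_slope:
  assumes "a \<ge> 0" and "z \<in> abel_domain a" and "\<bar>h\<bar> \<le> 1"
  shows "summable (\<lambda>n. abel_slope_coeff a h n * z ^ n)"
  by (rule summable_comparison_test[OF _ summable_abs_abel_poly[OF assms(1,2), of 1 1]])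
    (use abs_abel_slope_term_le[OF assms(1,3)] in auto)

lemma abel_gf_eq_slope:
  assumes "a \<ge> 0" and "z \<in> abel_domain a" and "\<bar>h\<bar> \<le> 1"
  shows "abel_gf a h z = 1 + h * abel_slope a h z"
proof -
  have "(\<lambda>n. abel_poly a h n / fact n * z ^ n) sums abel_gf a h z"
    using sums_eval_fps[of z "abel_fps a h"] abel_fps_conv_radius[OF assms(1,2), of h]
    by (simp add: abel_gf_def abel_fps_def)
  moreover have "(\<lambda>n. (if n = 0 then 1 else 0) + h * (abel_slope_coeff a h n * z ^ n))
      sums (1 + h * abel_slope a h z)"
    unfolding abel_slope_def
    using sums_single[of 0 "\<lambda>_. 1::real"] summable_abel_slope[OF assms]
    by (intro sums_add sums_mult summable_sums) auto
  moreover have "abel_poly a h n / fact n * z ^ n = (if n = 0 then 1 else 0) + h * (abel_slope_coeff a h n * z ^ n)" for n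
    by (simp add: abel_poly_def abel_slope_coeff_def)
  ultimately show ?thesis
    using sums_unique2 by simp
qed

lemma continuous_on_abel_slope:
  assumes "a \<ge> 0" and "z \<in> abel_domain a"
  shows "continuous_on {-1..1} (\<lambda>h. abel_slope a h z)"
proof -
  have "uniform_limit {-1..1} (\<lambda>N h. \<Sum>n<N. abel_slope_coeff a h n * z ^ n) (\<lambda>h. abel_slope a h z) sequentially"
    unfolding abel_slope_def
  proof (rule Weierstrass_m_test)
    show "summable (\<lambda>n. \<bar>abel_poly a 1 n / fact n\<bar> * \<bar>z\<bar> ^ n)"
      by (rule summable_abs_abel_poly[OF assms, of 1 1]) simp
    show "norm (abel_slope_coeff a h n * z ^ n) \<le> \<bar>abel_poly a 1 n / fact n\<bar> * \<bar>z\<bar> ^ n"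
      if "h \<in> {-1..1}" for n h
      using abs_abel_slope_term_le[OF assms(1), of h n z] that by (simp add: abs_le_iff)
  qed
  moreover have "continuous_on {-1..1} (\<lambda>h. abel_slope_coeff a h n * z ^ n)" for n
    by (cases n) (auto simp: abel_slope_coeff_def intro!: continuous_intros)
  then have "continuous_on {-1..1} (\<lambda>h. \<Sum>n<N. abel_slope_coeff a h n * z ^ n)" for N
    by (intro continuous_on_sum) auto
  ultimately show ?thesis
    by (intro uniform_limit_theorem) auto
qed

definition tree_fps :: "real \<Rightarrow> real fps" where
  "tree_fps a = Abs_fps (\<lambda>n. if n = 0 then 0 else (real n * a) ^ (n - 1) / fact n)"

definition tree :: "real \<Rightarrow> real \<Rightarrow> real" where
  "tree a z = eval_fps (tree_fps a) z"

lemma abel_slope_0: "abel_slope a 0 z = tree a z"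
proof -
  have "abel_slope_coeff a 0 = fps_nth (tree_fps a)"
    by (simp add: abel_slope_coeff_def tree_fps_def fun_eq_iff)
  then show ?thesis
    by (simp add: abel_slope_def tree_def eval_fps_def)
qed

lemma has_real_derivative_abel_gf:
  assumes "a \<ge> 0" and "z \<in> abel_domain a"
  shows "((\<lambda>y. abel_gf a y z) has_real_derivative abel_gf a y z * tree a z) (at y)"
proof -
  have "isCont (\<lambda>h. abel_slope a h z) 0"
    using continuous_on_abel_slope[OF assms] by (rule continuous_on_interior) auto
  then have "((\<lambda>h. abel_gf a y z * abel_slope a h z) \<longlongrightarrow> abel_gf a y z * tree a z) (at 0)"
    unfolding abel_slope_0[symmetric] isCont_def by (intro tendsto_mult_left)
  moreover have "eventually (\<lambda>h. abel_gf a y z * abel_slope a h z = (abel_gf a (y + h) z - abel_gf a y z) / h) (at 0)"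
  proof -
    have "eventually (\<lambda>h::real. h \<noteq> 0 \<and> \<bar>h\<bar> < 1) (at 0)"
      by (auto simp: eventually_at intro!: exI[of _ 1])
    then show ?thesis
      by eventually_elim
        (simp add: abel_gf_add[OF assms] abel_gf_eq_slope[OF assms] field_simps)
  qed
  ultimately show ?thesis
    unfolding DERIV_def by (rule Lim_transform_eventually)
qed

text \<open>Multiplicativity in y turns the generating function into an exponential.\<close>
lemma abel_gf_eq_exp:
  assumes "a \<ge> 0" and "z \<in> abel_domain a"
  shows "abel_gf a y z = exp (y * tree a z)"
proof -
  define T where "T = tree a z"
  have "((\<lambda>y. abel_gf a y z * exp (- T * y)) has_real_derivative 0) (at y)" for y
    using has_real_derivative_abel_gf[OF assms]
    by (auto intro!: derivative_eq_intros simp: T_def algebra_simps)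
  then have "abel_gf a y z * exp (- T * y) = abel_gf a 0 z * exp (- T * 0)"
    using DERIV_isconst_all[of "\<lambda>y. abel_gf a y z * exp (- T * y)" y 0] by blast
  then show ?thesis
    by (simp add: T_def exp_minus field_simps)
qed

lemma tree_fps_eq: "tree_fps a = fps_X * abel_fps a a"
proof (rule fps_ext)
  fix n
  show "fps_nth (tree_fps a) n = fps_nth (fps_X * abel_fps a a) n"
  proof (cases n)
    case (Suc m)
    have "(real (Suc m) * a) ^ m / fact (Suc m) = abel_poly a a m / fact m"
    proof (cases m)
      case (Suc j)
      have "a + real (Suc j) * a = real (Suc (Suc j)) * a"
        by (simp add: algebra_simps)
      then show ?thesis
        using Suc by (simp add: abel_poly_def field_simps del: of_nat_Suc fact_Suc)
          (simp add: algebra_simps)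
    qed simp
    then show ?thesis
      using Suc by (simp add: tree_fps_def abel_fps_def)
  qed (simp add: tree_fps_def)
qed

lemma tree_conv_radius:
  assumes "a \<ge> 0" and "z \<in> abel_domain a"
  shows "ereal \<bar>z\<bar> < fps_conv_radius (tree_fps a)"
  unfolding tree_fps_eq
  using fps_conv_radius_mult[of fps_X "abel_fps a a"] abel_fps_conv_radius[OF assms]
  by (auto intro: less_le_trans)

lemma tree_eq:
  assumes "a \<ge> 0" and "z \<in> abel_domain a"
  shows "tree a z = z * exp (a * tree a z)"
proof -
  have "tree a z = z * abel_gf a a z"
    unfolding tree_def tree_fps_eq abel_gf_def
    by (subst eval_fps_mult) (use abel_fps_conv_radius[OF assms] in auto)
  then show ?thesis
    unfolding abel_gf_eq_exp[OF assms] by (simp add: mult.commute)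
qed

lemma has_field_derivative_tree:
  assumes "a \<ge> 0" and "z \<in> abel_domain a"
  shows "(tree a has_field_derivative eval_fps (fps_deriv (tree_fps a)) z) (at z within A)"
  unfolding tree_def[abs_def]
  by (rule has_field_derivative_eval_fps) (use tree_conv_radius[OF assms] in simp)

lemma continuous_on_tree:
  assumes "a \<ge> 0" and "S \<subseteq> abel_domain a"
  shows "continuous_on S (tree a)"
  using has_field_derivative_tree[OF assms(1)] assms(2)
  by (intro DERIV_continuous_on) auto

lemma mult_exp_minus_strict_mono:
  fixes u v :: real
  assumes "0 \<le> u" "u < v" "v \<le> 1"
  shows "u * exp (- u) < v * exp (- v)"
proof (rule DERIV_pos_imp_increasing_open[OF \<open>u < v\<close>])
  fix x assume x: "u < x" "x < v"
  have "((\<lambda>t. t * exp (- t)) has_real_derivative exp (- x) * (1 - x)) (at x)"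
    by (auto intro!: derivative_eq_intros simp: algebra_simps)
  moreover have "exp (- x) * (1 - x) > 0"
    using x assms by simp
  ultimately show "\<exists>y. ((\<lambda>t. t * exp (- t)) has_real_derivative y) (at x) \<and> y > 0"
    by blast
qed (intro continuous_intros)

lemma tree_less:
  assumes a: "a \<ge> 0" and z: "z \<in> abel_domain a"
  shows "a * tree a z < 1"
proof (cases "z \<le> 0")
  case True
  then have "tree a z \<le> 0"
    by (subst tree_eq[OF assms]) (simp add: mult_nonpos_nonneg)
  then show ?thesis
    using a mult_nonneg_nonpos[of a "tree a z"] by linarith
next
  case False
  have sub: "{0..z} \<subseteq> abel_domain a"
  proof
    fix t assume "t \<in> {0..z}"
    then have "\<bar>t\<bar> * (a * exp 1) \<le> \<bar>z\<bar> * (a * exp 1)"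
      using a by (intro mult_right_mono) auto
    then show "t \<in> abel_domain a"
      using z by (simp add: abel_domain_def mult.assoc)
  qed
  show ?thesis
  proof (rule ccontr)
    assume "\<not> a * tree a z < 1"
    moreover have "a * tree a 0 \<le> 1"
      using tree_eq[OF a abel_domain_0] by simp
    moreover have "continuous_on {0..z} (\<lambda>t. a * tree a t)"
      using continuous_on_tree[OF a sub] by (intro continuous_intros)
    ultimately obtain t where t: "0 \<le> t" "t \<le> z" "a * tree a t = 1"
      using IVT'[of "\<lambda>t. a * tree a t" 0 1 z] False by auto
    then have t_dom: "t \<in> abel_domain a"
      using sub by auto
    have "a * tree a t = a * t * exp (a * tree a t)"
      by (subst tree_eq[OF a t_dom]) (simp add: mult.assoc)
    then have "a * t * exp 1 = 1"
      using t(3) by simp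
    then show False
      using t_dom t(1) by (simp add: abel_domain_def mult_ac)
  qed
qed

lemma exp_minus_in_abel_domain:
  assumes "0 \<le> a" and "a < 1"
  shows "exp (- a) \<in> abel_domain a"
  using mult_exp_minus_strict_mono[of a 1] assms
  by (simp add: abel_domain_def exp_minus field_simps)

lemma mult_exp_minus_inj:
  fixes u v :: real
  assumes "0 \<le> u" "u \<le> 1" "0 \<le> v" "v \<le> 1" and "u * exp (- u) = v * exp (- v)"
  shows "u = v"
  using mult_exp_minus_strict_mono[of u v] mult_exp_minus_strict_mono[of v u] assms
  by (cases u v rule: linorder_cases) auto

text \<open>At z = e^(-a) the equation T = z e^(a T) reads (a T) e^(-a T) = a e^(-a), and a T < 1.\<close>
lemma tree_exp_minus:
  assumes a: "0 \<le> a" "a < 1"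
  shows "tree a (exp (- a)) = 1"
proof -
  define T where "T = tree a (exp (- a))"
  note z = exp_minus_in_abel_domain[OF a]
  have T_eq: "T = exp (- a) * exp (a * T)"
    unfolding T_def by (rule tree_eq[OF a(1) z])
  have "T = 1"
  proof (cases "a = 0")
    case False
    have "0 \<le> T"
      using T_eq by (metis exp_gt_zero mult_pos_pos less_imp_le)
    then have aT: "0 \<le> a * T" "a * T \<le> 1"
      using tree_less[OF a(1) z] a(1) unfolding T_def[symmetric] by simp_all
    have "(a * T) * exp (- (a * T)) = a * exp (- a)"
      using T_eq by (simp add: exp_minus field_simps)
    from mult_exp_minus_inj[OF aT _ _ this] have "a * T = a"
      using a by linarith
    then show ?thesis
      using False by simp
  qed (use T_eq in simp)
  then show ?thesis
    by (simp add: T_def)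
qed

lemma has_real_derivative_tree_monomial:
  assumes "a * t \<noteq> 1"
  shows "((\<lambda>t. t ^ k * (1 / (1 - a * t)) ^ l) has_real_derivative
           real k * t ^ (k - 1) * (1 / (1 - a * t)) ^ l + a * real l * t ^ k * (1 / (1 - a * t)) ^ (l + 1)) (at t)"
proof -
  have "((\<lambda>t. 1 / (1 - a * t)) has_real_derivative a * (1 / (1 - a * t)) ^ 2) (at t)"
    using assms by (auto intro!: derivative_eq_intros simp: power2_eq_square field_simps)
  from DERIV_mult[OF DERIV_pow[of k t] DERIV_power[OF this, of l]] show ?thesis
    by (cases l) (simp_all add: algebra_simps power2_eq_square)
qed

text \<open>A list of triples (b, k, l) represents the function \<Sum> b t^k / (1 - a t)^l of the tree variable t.
  tree_poly_step represents P \<mapsto> (P' + y P) t / (1 - a t) + m P, which is what z d/dz + m does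
  to P (T(z)) e^(y T(z)), since z T'(z) = T / (1 - a T).\<close>
definition tree_poly_eval :: "real \<Rightarrow> (real \<times> nat \<times> nat) list \<Rightarrow> real \<Rightarrow> real" where
  "tree_poly_eval a cs t = (\<Sum>(b, k, l)\<leftarrow>cs. b * (t ^ k * (1 / (1 - a * t)) ^ l))"

definition tree_poly_deriv :: "real \<Rightarrow> (real \<times> nat \<times> nat) list \<Rightarrow> (real \<times> nat \<times> nat) list" where
  "tree_poly_deriv a cs = concat (map (\<lambda>(b, k, l). [(b * real k, k - 1, l), (b * a * real l, k, l + 1)]) cs)"

definition tree_poly_step :: "real \<Rightarrow> real \<Rightarrow> nat \<Rightarrow> (real \<times> nat \<times> nat) list \<Rightarrow> (real \<times> nat \<times> nat) list" where
  "tree_poly_step a y m cs = concat (map (\<lambda>(b, k, l).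
     [(b * real k, k, l + 1), (b * a * real l, k + 1, l + 2), (b * y, k + 1, l + 1), (b * real m, k, l)]) cs)"

lemma tree_poly_eval_Nil [simp]: "tree_poly_eval a [] t = 0"
  by (simp add: tree_poly_eval_def)

lemma tree_poly_eval_Cons [simp]:
  "tree_poly_eval a ((b, k, l) # cs) t = b * (t ^ k * (1 / (1 - a * t)) ^ l) + tree_poly_eval a cs t"
  by (simp add: tree_poly_eval_def)

lemma has_real_derivative_tree_poly_eval:
  assumes "a * t \<noteq> 1"
  shows "(tree_poly_eval a cs has_real_derivative tree_poly_eval a (tree_poly_deriv a cs) t) (at t)"
proof (induction cs)
  case Nil
  then show ?case by (simp add: tree_poly_deriv_def)
next
  case (Cons c cs)
  obtain b k l where c: "c = (b, k, l)"
    by (cases c) auto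
  show ?case
    using DERIV_add[OF DERIV_cmult[OF has_real_derivative_tree_monomial[OF assms, of k l], of b] Cons]
    by (simp add: c tree_poly_deriv_def algebra_simps)
qed

lemma tree_poly_eval_step:
  assumes "a * t \<noteq> 1"
  shows "tree_poly_eval a (tree_poly_step a y m cs) t
    = (tree_poly_eval a (tree_poly_deriv a cs) t + y * tree_poly_eval a cs t) * (t / (1 - a * t))
      + real m * tree_poly_eval a cs t"
proof (induction cs)
  case Nil
  then show ?case by (simp add: tree_poly_step_def tree_poly_deriv_def)
next
  case (Cons c cs)
  obtain b k l where c: "c = (b, k, l)"
    by (cases c) auto
  from Cons show ?case
    by (cases k) (simp_all add: c tree_poly_step_def tree_poly_deriv_def algebra_simps add_divide_distrib)
qed

primrec rising_tree_poly :: "real \<Rightarrow> real \<Rightarrow> nat \<Rightarrow> (real \<times> nat \<times> nat) list" where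
  "rising_tree_poly a y 0 = [(1, 0, 0)]"
| "rising_tree_poly a y (Suc m) = tree_poly_step a y m (rising_tree_poly a y m)"

text \<open>Differentiating T = z e^(a T) gives z T'(z) = T / (1 - a T).\<close>
lemma tree_deriv_eq:
  assumes a: "a \<ge> 0" and z: "z \<in> abel_domain a"
  shows "z * eval_fps (fps_deriv (tree_fps a)) z = tree a z / (1 - a * tree a z)"
proof -
  define T where "T = tree a z"
  define T' where "T' = eval_fps (fps_deriv (tree_fps a)) z"
  have "((\<lambda>w. w * exp (a * tree a w)) has_real_derivative exp (a * T) + z * (exp (a * T) * (a * T'))) (at z)"
    unfolding T_def T'_def
    by (auto intro!: derivative_eq_intros has_field_derivative_tree[OF a z])
  moreover have "((\<lambda>w. w * exp (a * tree a w)) has_real_derivative T') (at z)"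
    unfolding T'_def
    by (rule has_field_derivative_transform_within_open[OF has_field_derivative_tree[OF a z] open_abel_domain z])
      (use tree_eq[OF a] in auto)
  ultimately have "T' = exp (a * T) + z * (exp (a * T) * (a * T'))"
    by (rule DERIV_unique[rotated])
  then have "z * T' = z * exp (a * T) + a * (z * exp (a * T)) * (z * T')"
    by algebra
  also have "z * exp (a * T) = T"
    using tree_eq[OF a z] unfolding T_def by simp
  finally have "z * T' * (1 - a * T) = T"
    by algebra
  moreover have "1 - a * T \<noteq> 0"
    using tree_less[OF a z] unfolding T_def by simp
  ultimately show ?thesis
    unfolding T_def[symmetric] T'_def[symmetric] by (metis eq_divide_eq)
qed

lemma fps_conv_radius_X_deriv_plus_const:
  fixes F :: "real fps"
  shows "fps_conv_radius F \<le> fps_conv_radius (fps_X * fps_deriv F + fps_const r * F)"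
proof -
  have "fps_conv_radius F \<le> fps_conv_radius (fps_X * fps_deriv F)"
    using fps_conv_radius_mult[of fps_X "fps_deriv F"] fps_conv_radius_deriv[of F] by simp
  moreover have "fps_conv_radius F \<le> fps_conv_radius (fps_const r * F)"
    by (cases "r = 0") (simp_all add: fps_conv_radius_cmult_left)
  ultimately show ?thesis
    using fps_conv_radius_add[of "fps_X * fps_deriv F" "fps_const r * F"]
    by (meson min.boundedI order.trans)
qed

lemma eval_fps_X_deriv_plus_const:
  fixes F :: "real fps"
  assumes F: "ereal (norm z) < fps_conv_radius F"
  shows "eval_fps (fps_X * fps_deriv F + fps_const r * F) z = z * eval_fps (fps_deriv F) z + r * eval_fps F z"
proof -
  have D: "ereal (norm z) < fps_conv_radius (fps_deriv F)"
    using F fps_conv_radius_deriv[of F] by (rule less_le_trans)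
  have "ereal (norm z) < fps_conv_radius (fps_X * fps_deriv F)"
    using D fps_conv_radius_mult[of fps_X "fps_deriv F"] by (auto intro: less_le_trans)
  moreover have "ereal (norm z) < fps_conv_radius (fps_const r * F)"
    using F by (cases "r = 0") (simp_all add: fps_conv_radius_cmult_left)
  ultimately show ?thesis
    using eval_fps_mult[of z fps_X "fps_deriv F"] eval_fps_mult[of z "fps_const r" F] D F
    by (simp add: eval_fps_add)
qed

definition abel_rising_fps :: "real \<Rightarrow> real \<Rightarrow> nat \<Rightarrow> real fps" where
  "abel_rising_fps a y m = Abs_fps (\<lambda>n. pochhammer (real n) m * (abel_poly a y n / fact n))"

lemma abel_rising_fps_0: "abel_rising_fps a y 0 = abel_fps a y"
  by (simp add: abel_rising_fps_def abel_fps_def)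

lemma abel_rising_fps_Suc:
  "abel_rising_fps a y (Suc m) = fps_X * fps_deriv (abel_rising_fps a y m) + fps_const (real m) * abel_rising_fps a y m"
proof (rule fps_ext)
  fix n
  show "fps_nth (abel_rising_fps a y (Suc m)) n
      = fps_nth (fps_X * fps_deriv (abel_rising_fps a y m) + fps_const (real m) * abel_rising_fps a y m) n"
    by (cases n) (simp_all add: abel_rising_fps_def pochhammer_Suc distrib_left distrib_right mult_ac)
qed

lemma abel_rising_fps_conv_radius:
  assumes "a \<ge> 0" and "z \<in> abel_domain a"
  shows "ereal \<bar>z\<bar> < fps_conv_radius (abel_rising_fps a y m)"
proof (induction m)
  case 0
  then show ?case
    using abel_fps_conv_radius[OF assms] by (simp add: abel_rising_fps_0)
next
  case (Suc m)
  then show ?case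
    unfolding abel_rising_fps_Suc using fps_conv_radius_X_deriv_plus_const by (rule less_le_trans)
qed

lemma has_real_derivative_tree_poly_exp:
  assumes a: "a \<ge> 0" and z: "z \<in> abel_domain a"
  shows "((\<lambda>w. tree_poly_eval a cs (tree a w) * exp (y * tree a w)) has_real_derivative
      (tree_poly_eval a (tree_poly_deriv a cs) (tree a z) + y * tree_poly_eval a cs (tree a z))
        * eval_fps (fps_deriv (tree_fps a)) z * exp (y * tree a z)) (at z)"
proof -
  have "a * tree a z \<noteq> 1"
    using tree_less[OF a z] by simp
  from DERIV_chain2[OF has_real_derivative_tree_poly_eval[OF this] has_field_derivative_tree[OF a z]]
  have "((\<lambda>w. tree_poly_eval a cs (tree a w)) has_real_derivative
      tree_poly_eval a (tree_poly_deriv a cs) (tree a z) * eval_fps (fps_deriv (tree_fps a)) z) (at z)" .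
  from DERIV_mult[OF this DERIV_fun_exp[OF DERIV_cmult[OF has_field_derivative_tree[OF a z]]]]
  show ?thesis
    by (simp add: algebra_simps)
qed

lemma eval_abel_rising_fps:
  assumes a: "a \<ge> 0" and z: "z \<in> abel_domain a"
  shows "eval_fps (abel_rising_fps a y m) z
    = tree_poly_eval a (rising_tree_poly a y m) (tree a z) * exp (y * tree a z)"
  using z
proof (induction m arbitrary: z)
  case 0
  then show ?case
    by (simp add: abel_rising_fps_0 abel_gf_eq_exp[OF a, symmetric] abel_gf_def)
next
  case (Suc m)
  define F where "F = abel_rising_fps a y m"
  define P where "P = tree_poly_eval a (rising_tree_poly a y m)"
  define P' where "P' = tree_poly_eval a (tree_poly_deriv a (rising_tree_poly a y m))"
  define T where "T = tree a z"
  define T' where "T' = eval_fps (fps_deriv (tree_fps a)) z"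
  have "(eval_fps F has_real_derivative eval_fps (fps_deriv F) z) (at z)"
    using abel_rising_fps_conv_radius[OF a Suc.prems] unfolding F_def
    by (intro has_field_derivative_eval_fps) simp
  then have "((\<lambda>w. P (tree a w) * exp (y * tree a w)) has_real_derivative eval_fps (fps_deriv F) z) (at z)"
    by (rule has_field_derivative_transform_within_open[OF _ open_abel_domain Suc.prems])
      (simp add: Suc.IH F_def P_def)
  then have deriv: "eval_fps (fps_deriv F) z = (P' T + y * P T) * T' * exp (y * T)"
    using has_real_derivative_tree_poly_exp[OF a Suc.prems] unfolding P_def P'_def T_def T'_def
    by (rule DERIV_unique)
  have "eval_fps (abel_rising_fps a y (Suc m)) z = z * eval_fps (fps_deriv F) z + real m * eval_fps F z"
    unfolding abel_rising_fps_Suc F_def[symmetric]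
    using abel_rising_fps_conv_radius[OF a Suc.prems] by (intro eval_fps_X_deriv_plus_const) (simp add: F_def)
  also have "\<dots> = ((P' T + y * P T) * (z * T') + real m * P T) * exp (y * T)"
    using Suc.IH[OF Suc.prems] unfolding deriv F_def[symmetric] P_def[symmetric] T_def[symmetric]
    by (simp add: algebra_simps)
  also have "z * T' = T / (1 - a * T)"
    unfolding T_def T'_def by (rule tree_deriv_eq[OF a Suc.prems])
  finally show ?case
    using tree_poly_eval_step[of a T y m] tree_less[OF a Suc.prems]
    by (simp add: P_def P'_def T_def times_divide_eq_right)
qed

definition omega_rising_moment :: "real \<Rightarrow> real \<Rightarrow> nat \<Rightarrow> real" where
  "omega_rising_moment \<beta> u m = tree_poly_eval \<beta> (rising_tree_poly \<beta> u m) 1"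

lemma omega_beta_Suc_eq:
  "omega_beta a (Suc k) y = exp (- y) * (abel_poly a y (Suc k) / fact (Suc k) * exp (- a) ^ Suc k)"
proof -
  have "exp (- (y + real (Suc k) * a)) = exp (- y) * exp (- a) ^ Suc k"
    by (simp add: exp_add[symmetric] exp_of_nat_mult[symmetric] algebra_simps)
  then show ?thesis
    by (simp add: omega_beta_def abel_poly_def)
qed

text \<open>The rising factorial moments of the weights; the term v = 0 of the generating series
  accounts for the mass e^(-u) at the origin.\<close>
lemma sums_omega_beta_pochhammer:
  assumes "0 \<le> \<beta>" and "\<beta> < 1"
  shows "(\<lambda>v. omega_beta \<beta> (Suc v) u * pochhammer (real v + 1) m)
           sums (omega_rising_moment \<beta> u m - (if m = 0 then exp (- u) else 0))"
proof -
  define z where "z = exp (- \<beta>)"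
  have z: "z \<in> abel_domain \<beta>"
    unfolding z_def by (rule exp_minus_in_abel_domain[OF assms])
  have "(\<lambda>n. fps_nth (abel_rising_fps \<beta> u m) n * z ^ n) sums eval_fps (abel_rising_fps \<beta> u m) z"
    using abel_rising_fps_conv_radius[OF assms(1) z] by (intro sums_eval_fps) simp
  also have "eval_fps (abel_rising_fps \<beta> u m) z = omega_rising_moment \<beta> u m * exp u"
    using eval_abel_rising_fps[OF assms(1) z] tree_exp_minus[OF assms]
    unfolding z_def omega_rising_moment_def by simp
  finally have "(\<lambda>n. exp (- u) * (fps_nth (abel_rising_fps \<beta> u m) n * z ^ n)) sums omega_rising_moment \<beta> u m"
    using sums_mult[of _ _ "exp (- u)"] by (fastforce simp: exp_minus field_simps)
  then have "(\<lambda>v. exp (- u) * (fps_nth (abel_rising_fps \<beta> u m) (Suc v) * z ^ Suc v))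
      sums (omega_rising_moment \<beta> u m - exp (- u) * (fps_nth (abel_rising_fps \<beta> u m) 0 * z ^ 0))"
    by (subst sums_Suc_iff) simp
  moreover have "exp (- u) * (fps_nth (abel_rising_fps \<beta> u m) (Suc v) * z ^ Suc v)
      = omega_beta \<beta> (Suc v) u * pochhammer (real v + 1) m" for v
    by (simp add: omega_beta_Suc_eq abel_rising_fps_def z_def add.commute)
  ultimately show ?thesis
    by (cases "m = 0") (simp_all add: abel_rising_fps_def pochhammer_0_left)
qed

lemma integral_jb_p_polynomial:
  fixes b :: "nat \<Rightarrow> real"
  assumes c: "c > 0" and n: "real n > (real d + 1) * c"
  shows "(real n - c) / c * integral {0..} (\<lambda>t. jb_p n v c t * (\<Sum>m\<le>d. b m * t ^ m))
    = (\<Sum>m\<le>d. b m * pochhammer (real v + 1) m / (\<Prod>i<m. real n - (real i + 2) * c))"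
proof -
  define Q where "Q m = (\<Prod>i<m. real n - (real i + 2) * c)" for m
  have nm: "real n > (real m + 1) * c" if "m \<le> d" for m
  proof -
    have "(real m + 1) * c \<le> (real d + 1) * c"
      using that c by (intro mult_right_mono) auto
    with n show ?thesis by linarith
  qed
  have "((\<lambda>t. \<Sum>m\<le>d. b m * (jb_p n v c t * t ^ m)) has_integral
      (\<Sum>m\<le>d. b m * (c / (real n - c) * (pochhammer (real v + 1) m / Q m)))) {0..}"
    unfolding Q_def using has_integral_jb_p_moment[OF c nm]
    by (intro has_integral_sum has_integral_mult_right) auto
  then have "integral {0..} (\<lambda>t. jb_p n v c t * (\<Sum>m\<le>d. b m * t ^ m))
      = c / (real n - c) * (\<Sum>m\<le>d. b m * pochhammer (real v + 1) m / Q m)"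
    by (simp add: integral_unique sum_distrib_left mult_ac)
  moreover have "real n - c > 0"
    using nm[of 0] by simp
  ultimately show ?thesis
    using c unfolding Q_def by simp
qed

lemma D_op_polynomial:
  fixes b :: "nat \<Rightarrow> real"
  assumes c: "c > 0" and \<beta>: "0 \<le> \<beta>" "\<beta> < 1" and n: "real n > (real d + 1) * c"
  shows "D_op n c \<beta> (\<lambda>t. \<Sum>m\<le>d. b m * t ^ m) x
    = (\<Sum>m\<le>d. b m * omega_rising_moment \<beta> (real n * r_n n c \<beta> x) m / (\<Prod>i<m. real n - (real i + 2) * c))"
proof -
  define u where "u = real n * r_n n c \<beta> x"
  define Q where "Q m = (\<Prod>i<m. real n - (real i + 2) * c)" for m
  define g where "g v = omega_beta \<beta> (Suc v) u * integral {0..} (\<lambda>t. jb_p n v c t * (\<Sum>m\<le>d. b m * t ^ m))" for v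
  define R where "R = (\<Sum>m\<le>d. b m * (omega_rising_moment \<beta> u m - (if m = 0 then exp (- u) else 0)) / Q m)"
  have "real d * c \<ge> 0"
    using c by simp
  then have nc: "real n - c > 0"
    using n by (simp add: algebra_simps)
  have "(\<lambda>v. \<Sum>m\<le>d. b m * (omega_beta \<beta> (Suc v) u * pochhammer (real v + 1) m) / Q m) sums R"
    unfolding R_def by (intro sums_sum sums_divide sums_mult sums_omega_beta_pochhammer \<beta>)
  moreover have "(\<Sum>m\<le>d. b m * (omega_beta \<beta> (Suc v) u * pochhammer (real v + 1) m) / Q m)
      = (real n - c) / c * g v" for v
    unfolding g_def mult.left_commute[of "(real n - c) / c"] integral_jb_p_polynomial[OF c n] Q_def
    by (simp add: sum_distrib_left mult_ac)
  ultimately have "(\<lambda>v. c / (real n - c) * ((real n - c) / c * g v)) sums (c / (real n - c) * R)"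
    by (intro sums_mult) simp
  then have "g sums (c / (real n - c) * R)"
    using c nc by simp
  then have "(real n - c) / c * (\<Sum>v. g v) = R"
    using c nc by (simp add: sums_iff)
  moreover have "(\<Sum>m\<le>d. b m * (if m = 0 then exp (- u) else 0) / Q m) = exp (- u) * b 0"
    by (subst sum.cong[OF refl, of _ _ "\<lambda>m. if m = 0 then exp (- u) * b 0 else 0"]) (auto simp: Q_def)
  then have "R = (\<Sum>m\<le>d. b m * omega_rising_moment \<beta> u m / Q m) - exp (- u) * b 0"
    unfolding R_def by (simp add: right_diff_distrib diff_divide_distrib sum_subtractf)
  ultimately show ?thesis
    unfolding D_op_def u_def[symmetric] Q_def[symmetric] g_def[symmetric] by simp
qed

lemma omega_rising_moment_values:
  assumes "\<beta> \<noteq> 1"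
  defines "q \<equiv> 1 / (1 - \<beta>)"
  shows "omega_rising_moment \<beta> u 0 = 1"
    and "omega_rising_moment \<beta> u 1 = u * q"
    and "omega_rising_moment \<beta> u 2 = u^2 * q^2 + u * (q^3 + q)"
    and "omega_rising_moment \<beta> u 3 = u^3 * q^3 + 3 * u^2 * (q^4 + q^2) + u * (3 * q^5 - 2 * q^4 + 3 * q^3 + 2 * q)"
    and "omega_rising_moment \<beta> u 4 = u^4 * q^4 + u^3 * (6 * q^5 + 6 * q^3)
      + u^2 * (15 * q^6 - 8 * q^5 + 18 * q^4 + 11 * q^2)
      + u * (15 * q^7 - 20 * q^6 + 24 * q^5 - 12 * q^4 + 11 * q^3 + 6 * q)"
proof -
  have q: "(1 - \<beta>) * q = 1"
    using assms(1) unfolding q_def by simp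
  have eval: "omega_rising_moment \<beta> u m = (\<Sum>(b, k, l)\<leftarrow>rising_tree_poly \<beta> u m. b * q ^ l)" for m
    by (simp add: omega_rising_moment_def tree_poly_eval_def q_def)
  show "omega_rising_moment \<beta> u 0 = 1"
    by (simp add: eval)
  show "omega_rising_moment \<beta> u 1 = u * q"
    by (simp add: eval tree_poly_step_def)
  show "omega_rising_moment \<beta> u 2 = u^2 * q^2 + u * (q^3 + q)"
    using q by (simp add: eval tree_poly_step_def numeral_eq_Suc) algebra
  show "omega_rising_moment \<beta> u 3 = u^3 * q^3 + 3 * u^2 * (q^4 + q^2) + u * (3 * q^5 - 2 * q^4 + 3 * q^3 + 2 * q)"
    using q by (simp add: eval tree_poly_step_def numeral_eq_Suc) algebra
  show "omega_rising_moment \<beta> u 4 = u^4 * q^4 + u^3 * (6 * q^5 + 6 * q^3)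
      + u^2 * (15 * q^6 - 8 * q^5 + 18 * q^4 + 11 * q^2)
      + u * (15 * q^7 - 20 * q^6 + 24 * q^5 - 12 * q^4 + 11 * q^3 + 6 * q)"
    using q by (simp add: eval tree_poly_step_def numeral_eq_Suc) algebra
qed

lemma n_mult_r_n: "real n > 0 \<Longrightarrow> real n * r_n n c \<beta> x = (real n - 2 * c) * (1 - \<beta>) * x"
  by (simp add: r_n_def)

lemma D_op_central_moment_1:
  assumes c: "c > 0" and \<beta>: "0 \<le> \<beta>" "\<beta> < 1" and n: "real n > 2 * c"
  shows "D_op n c \<beta> (\<lambda>t. t - x) x = 0"
proof -
  define b where "b = [- x, 1]"
  have "(\<lambda>t. t - x) = (\<lambda>t. \<Sum>m\<le>1. b ! m * t ^ m)"
    by (simp add: b_def)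
  moreover have "real n > (real 1 + 1) * c"
    using n by simp
  ultimately have "D_op n c \<beta> (\<lambda>t. t - x) x
      = - x + (real n - 2 * c) * (1 - \<beta>) * x * (1 / (1 - \<beta>)) / (real n - 2 * c)"
    using D_op_polynomial[OF c \<beta>, of 1 n "\<lambda>m. b ! m"] n c \<beta>
    by (simp add: b_def omega_rising_moment_values omega_rising_moment_values(2)[unfolded One_nat_def] n_mult_r_n atMost_nat_numeral atMost_Suc lessThan_nat_numeral)
  also have "\<dots> = 0"
    using n \<beta> by simp
  finally show ?thesis .
qed

lemma D_op_central_moment_2:
  assumes c: "c > 0" and \<beta>: "0 \<le> \<beta>" "\<beta> < 1" and n: "real n > 3 * c"
  shows "D_op n c \<beta> (\<lambda>t. (t - x) ^ 2) x
    = c / (real n - 3 * c) * x ^ 2 + (2 - 2 * \<beta> + \<beta> ^ 2) / ((real n - 3 * c) * (1 - \<beta>) ^ 2) * x"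
proof -
  define b where "b = [x ^ 2, - 2 * x, 1]"
  define q where "q = 1 / (1 - \<beta>)"
  define u where "u = (real n - 2 * c) * (1 - \<beta>) * x"
  have "(\<lambda>t. (t - x) ^ 2) = (\<lambda>t. \<Sum>m\<le>2. b ! m * t ^ m)"
    by (simp add: b_def numeral_eq_Suc power2_eq_square algebra_simps)
  moreover have "real n > (real 2 + 1) * c"
    using n by simp
  ultimately have "D_op n c \<beta> (\<lambda>t. (t - x) ^ 2) x
      = x ^ 2 - 2 * x * (u * q) / (real n - 2 * c)
        + (u^2 * q^2 + u * (q^3 + q)) / ((real n - 2 * c) * (real n - 3 * c))"
    using D_op_polynomial[OF c \<beta>, of 2 n "\<lambda>m. b ! m"] n c \<beta>
    by (simp add: b_def omega_rising_moment_values omega_rising_moment_values(2)[unfolded One_nat_def] n_mult_r_n q_def u_def atMost_nat_numeral atMost_Suc lessThan_nat_numeral)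
  also have "\<dots> = c / (real n - 3 * c) * x ^ 2 + (2 - 2 * \<beta> + \<beta> ^ 2) / ((real n - 3 * c) * (1 - \<beta>) ^ 2) * x"
  proof -
    have "x ^ 2 - 2 * x * (A * p * x * (1 / p)) / A
        + ((A * p * x) ^ 2 * (1 / p) ^ 2 + A * p * x * ((1 / p) ^ 3 + 1 / p)) / (A * B)
        = (A - B) / B * x ^ 2 + (2 - 2 * (1 - p) + (1 - p) ^ 2) / (B * p ^ 2) * x"
      if "A \<noteq> 0" "B \<noteq> 0" "p \<noteq> 0" for A B p
      using that by (simp add: field_simps power2_eq_square power3_eq_cube)
    from this[of "real n - 2 * c" "real n - 3 * c" "1 - \<beta>"] show ?thesis
      using n c \<beta> unfolding u_def q_def by simp
  qed
  finally show ?thesis .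
qed

lemma D_op_central_moment_4:
  assumes c: "c > 0" and \<beta>: "0 \<le> \<beta>" "\<beta> < 1" and n: "real n > 5 * c"
  defines "q \<equiv> 1 / (1 - \<beta>)"
  shows "D_op n c \<beta> (\<lambda>t. (t - x) ^ 4) x
    = ((3 * x^2 * (1 + q^2)^2 + 6 * c * x^3 * (1 + q^2) + 3 * c^2 * x^4) * (real n - 2 * c)
       + x * (6 + 11 * q^2 - 12 * q^3 + 24 * q^4 - 20 * q^5 + 15 * q^6)
       + c * x^2 * (24 + 36 * q^2 - 24 * q^3 + 36 * q^4) + 36 * c^2 * x^3 * (1 + q^2) + 18 * c^3 * x^4)
      / ((real n - 3 * c) * (real n - 4 * c) * (real n - 5 * c))"
proof -
  define b where "b = [x ^ 4, - 4 * x ^ 3, 6 * x ^ 2, - 4 * x, 1]"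
  define u where "u = (real n - 2 * c) * (1 - \<beta>) * x"
  have "(\<lambda>t. (t - x) ^ 4) = (\<lambda>t. \<Sum>m\<le>4. b ! m * t ^ m)"
    by (rule ext) (simp add: b_def atMost_nat_numeral atMost_Suc, algebra)
  moreover have "real n > (real 4 + 1) * c"
    using n by simp
  ultimately have "D_op n c \<beta> (\<lambda>t. (t - x) ^ 4) x
      = x ^ 4 - 4 * x ^ 3 * (u * q) / (real n - 2 * c)
        + 6 * x ^ 2 * (u^2 * q^2 + u * (q^3 + q)) / ((real n - 2 * c) * (real n - 3 * c))
        - 4 * x * (u^3 * q^3 + 3 * u^2 * (q^4 + q^2) + u * (3 * q^5 - 2 * q^4 + 3 * q^3 + 2 * q))
          / ((real n - 2 * c) * (real n - 3 * c) * (real n - 4 * c))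
        + (u^4 * q^4 + u^3 * (6 * q^5 + 6 * q^3) + u^2 * (15 * q^6 - 8 * q^5 + 18 * q^4 + 11 * q^2)
           + u * (15 * q^7 - 20 * q^6 + 24 * q^5 - 12 * q^4 + 11 * q^3 + 6 * q))
          / ((real n - 2 * c) * (real n - 3 * c) * (real n - 4 * c) * (real n - 5 * c))"
    using D_op_polynomial[OF c \<beta>, of 4 n "\<lambda>m. b ! m"] n c \<beta>
    by (simp add: b_def omega_rising_moment_values omega_rising_moment_values(2)[unfolded One_nat_def]
        n_mult_r_n q_def u_def atMost_nat_numeral atMost_Suc lessThan_nat_numeral ac_simps)
  also have "\<dots> = ((3 * x^2 * (1 + q^2)^2 + 6 * c * x^3 * (1 + q^2) + 3 * c^2 * x^4) * (real n - 2 * c)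
       + x * (6 + 11 * q^2 - 12 * q^3 + 24 * q^4 - 20 * q^5 + 15 * q^6)
       + c * x^2 * (24 + 36 * q^2 - 24 * q^3 + 36 * q^4) + 36 * c^2 * x^3 * (1 + q^2) + 18 * c^3 * x^4)
      / ((real n - 3 * c) * (real n - 4 * c) * (real n - 5 * c))"
  proof -
    have "x ^ 4 - 4 * x ^ 3 * (A * p * x * q) / A
        + 6 * x ^ 2 * ((A * p * x)^2 * q^2 + A * p * x * (q^3 + q)) / (A * B)
        - 4 * x * ((A * p * x)^3 * q^3 + 3 * (A * p * x)^2 * (q^4 + q^2) + A * p * x * (3 * q^5 - 2 * q^4 + 3 * q^3 + 2 * q))
          / (A * B * C)
        + ((A * p * x)^4 * q^4 + (A * p * x)^3 * (6 * q^5 + 6 * q^3) + (A * p * x)^2 * (15 * q^6 - 8 * q^5 + 18 * q^4 + 11 * q^2)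
           + A * p * x * (15 * q^7 - 20 * q^6 + 24 * q^5 - 12 * q^4 + 11 * q^3 + 6 * q))
          / (A * B * C * E)
      = ((3 * x^2 * (1 + q^2)^2 + 6 * c * x^3 * (1 + q^2) + 3 * c^2 * x^4) * A
       + x * (6 + 11 * q^2 - 12 * q^3 + 24 * q^4 - 20 * q^5 + 15 * q^6)
       + c * x^2 * (24 + 36 * q^2 - 24 * q^3 + 36 * q^4) + 36 * c^2 * x^3 * (1 + q^2) + 18 * c^3 * x^4)
      / (B * C * E)"
      if "A \<noteq> 0" "B \<noteq> 0" "C \<noteq> 0" "E \<noteq> 0" "B = A - c" "C = A - 2 * c" "E = A - 3 * c" "p * q = 1"
      for A B C E p
      using that(1-4) apply (simp add: field_simps)
      using that(5-8) by algebra
    from this[of "real n - 2 * c" "real n - 3 * c" "real n - 4 * c" "real n - 5 * c" "1 - \<beta>"] show ?thesis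
      using n c \<beta> unfolding u_def q_def by (simp add: algebra_simps)
  qed
  finally show ?thesis .
qed

lemma eventually_real_gt_sequentially: "eventually (\<lambda>n::nat. real n > B) sequentially"
  using filterlim_real_sequentially by (simp add: filterlim_at_top_dense)

lemma linear_div_cubic_smallo:
  fixes a0 a1 b1 b2 b3 :: real
  shows "(\<lambda>n::nat. (a1 * real n + a0) / ((real n - b1) * (real n - b2) * (real n - b3))) \<in> o(\<lambda>n. 1 / real n)"
proof (rule smalloI_tendsto)
  define h where "h n = 1 / real n" for n :: nat
  have "h \<longlonglongrightarrow> 0"
    unfolding h_def by (rule lim_const_over_n)
  then have "(\<lambda>n. (a1 + a0 * h n) * h n / ((1 - b1 * h n) * (1 - b2 * h n) * (1 - b3 * h n)))
      \<longlonglongrightarrow> (a1 + a0 * 0) * 0 / ((1 - b1 * 0) * (1 - b2 * 0) * (1 - b3 * 0))"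
    by (intro tendsto_intros) auto
  moreover have ident: "(a1 + a0 * (1 / N)) * (1 / N) / ((1 - b1 * (1 / N)) * (1 - b2 * (1 / N)) * (1 - b3 * (1 / N)))
      = (a1 * N + a0) / ((N - b1) * (N - b2) * (N - b3)) / (1 / N)" if "N > 0" for N :: real
  proof -
    define X D where "X = a1 * N + a0" and "D = (N - b1) * (N - b2) * (N - b3)"
    have "(a1 + a0 * (1 / N)) * (1 / N) = X / N ^ 2"
      "(1 - b1 * (1 / N)) * (1 - b2 * (1 / N)) * (1 - b3 * (1 / N)) = D / N ^ 3"
      using that unfolding X_def D_def by (simp_all add: field_simps power2_eq_square power3_eq_cube)
    moreover have "X / N ^ 2 / (D / N ^ 3) = X / D / (1 / N)"
      using that by (cases "D = 0") (simp_all add: field_simps power2_eq_square power3_eq_cube)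
    ultimately show ?thesis
      unfolding X_def D_def by simp
  qed
  moreover have "eventually (\<lambda>n. (a1 + a0 * h n) * h n / ((1 - b1 * h n) * (1 - b2 * h n) * (1 - b3 * h n))
      = (a1 * real n + a0) / ((real n - b1) * (real n - b2) * (real n - b3)) / (1 / real n)) sequentially"
    using eventually_gt_at_top[of 0] unfolding h_def by eventually_elim (rule ident, simp)
  ultimately show "(\<lambda>n. (a1 * real n + a0) / ((real n - b1) * (real n - b2) * (real n - b3)) / (1 / real n)) \<longlonglongrightarrow> 0"
    by (simp add: Lim_transform_eventually)
qed (use eventually_gt_at_top[of 0] in \<open>auto elim: eventually_mono\<close>)

lemma D_op_central_moment_4_smallo:
  assumes c: "c > 0" and \<beta>: "0 \<le> \<beta>" "\<beta> < 1"
  shows "(\<lambda>n::nat. D_op n c \<beta> (\<lambda>t. (t - x) ^ 4) x) \<in> o(\<lambda>n. 1 / real n)"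
proof -
  define q where "q = 1 / (1 - \<beta>)"
  define K2 where "K2 = 3 * x^2 * (1 + q^2)^2 + 6 * c * x^3 * (1 + q^2) + 3 * c^2 * x^4"
  define K1 where "K1 = x * (6 + 11 * q^2 - 12 * q^3 + 24 * q^4 - 20 * q^5 + 15 * q^6)
    + c * x^2 * (24 + 36 * q^2 - 24 * q^3 + 36 * q^4) + 36 * c^2 * x^3 * (1 + q^2) + 18 * c^3 * x^4"
  have "eventually (\<lambda>n::nat. D_op n c \<beta> (\<lambda>t. (t - x) ^ 4) x
      = (K2 * (real n - 2 * c) + K1) / ((real n - 3 * c) * (real n - 4 * c) * (real n - 5 * c))) sequentially"
    using eventually_real_gt_sequentially[of "5 * c"]
    by eventually_elim (simp add: D_op_central_moment_4[OF c \<beta>] K1_def K2_def q_def add.assoc)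
  moreover have "(\<lambda>n::nat. (K2 * (real n - 2 * c) + K1) / ((real n - 3 * c) * (real n - 4 * c) * (real n - 5 * c)))
      \<in> o(\<lambda>n. 1 / real n)"
    using linear_div_cubic_smallo[of K2 "K1 - 2 * c * K2" "3 * c" "4 * c" "5 * c"]
    by (simp add: algebra_simps)
  ultimately show ?thesis
    by (subst landau_o.small.in_cong)
qed

theorem lemma5:
  fixes c \<beta> x :: real
  assumes "c > 0" and "0 \<le> \<beta>" and "\<beta> < 1" and "x \<ge> 0"
  shows "(\<forall>n::nat. real n > 2 * c \<longrightarrow> D_op n c \<beta> (\<lambda>t. t - x) x = 0)
       \<and> (\<forall>n::nat. real n > 3 * c \<longrightarrow>
            D_op n c \<beta> (\<lambda>t. (t - x) ^ 2) x
              = c / (real n - 3 * c) * x ^ 2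
                + (2 - 2 * \<beta> + \<beta> ^ 2) / ((real n - 3 * c) * (1 - \<beta>) ^ 2) * x)
       \<and> (\<lambda>n::nat. D_op n c \<beta> (\<lambda>t. (t - x) ^ 4) x) \<in> o(\<lambda>n. 1 / real n)"
  using D_op_central_moment_1[OF assms(1-3)] D_op_central_moment_2[OF assms(1-3)]
    D_op_central_moment_4_smallo[OF assms(1-3)]
  by blast

end
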